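(* With the setting below, let $k:\mathbb R^d\times\mathbb R^c\times\mathbb R^c\to\operatorname{Hom}(\mathbb R^c,\mathbb R^{c'})$ satisfy the steerability constraint $k(hy,\rho(h)u,\rho(h)v)=\sigma(h)k(y,u,v)\rho(h)^{-1}$ for all $h\in H$, $y\in\mathbb R^d$, $u,v\in\mathbb R^c$, and let $[\Psi_kf](x)=\int_{\mathbb R^d}k(x'-x,f(x),f(x'))f(x')\,\mathrm{d}x'$ for $f:\mathbb R^d\to\mathbb R^c$. Define $\kappa:G\times\mathbb R^c\times\mathbb R^c\to\operatorname{Hom}(\mathbb R^c,\mathbb R^{c'})$ by $\kappa(g,u,v)=k(\pi(g),u,\rho(\mathrm h(g))v)\rho(\mathrm h(g))$ and $\hat\omega(g^{-1}F,g'):=\kappa\big(g',[g^{-1}F](e),[g^{-1}F](g')\big)[g^{-1}F](g')$. Then for all $F\in\mathcal I_\rho$ and $g\in G$, $$\int_G\hat\omega(g^{-1}F,g')\,\mathrm{d}g'=[(\Lambda^\uparrow\circ\Psi_k\circ\Lambda^\downarrow)F](g),$$ i.e. the lifted implicit steerable convolution is an operator of the form $F\mapsto\int_G\hat\omega(g^{-1}F,g')\,\mathrm{d}g'$.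
   Context: $G=\mathbb R^d\rtimes H$ with $H\le O(d)$ closed, elements $(x,h)$, product $(x,h)(x',h')=(x+hx',hh')$, Haar measure $\mathrm{d}x\,\mathrm{d}h$ with Lebesgue $\mathrm{d}x$ and normalised Haar measure $\mathrm{d}h$ on $H$; $\pi(x,h)=x$, $\mathrm h(x,h)=h$, $s(x)=(x,e)$. $(\rho,\mathbb R^c)$, $(\sigma,\mathbb R^{c'})$ are representations of $H$; the feature vectors in $\mathbb R^c$ contain both node features and regular features. $\mathcal I_\rho$ is the induced representation: functions $F:G\to\mathbb R^c$ with $F(gh)=\rho(h^{-1})F(g)$, with action $(kF)(g)=F(k^{-1}g)$, so $[g^{-1}F](g')=F(gg')$. The lift and sink maps are $[\Lambda^\uparrow f](g)=\sigma(\mathrm h(g)^{-1})f(\pi(g))$ for $\mathbb R^{c'}$-valued $f$ and $[\Lambda^\downarrow F](x)=F(s(x))$. Integrals are assumed to exist. *)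

theory Defs
  imports "HOL-Analysis.Analysis"
begin

type_synonym ('d) Gelem = "(real^'d) \<times> (real^'d^'d)"

definition Gmul :: "'d::finite Gelem \<Rightarrow> 'd Gelem \<Rightarrow> 'd Gelem" where
  "Gmul g g' = (fst g + (snd g *v fst g'), snd g ** snd g')"

definition Gunit :: "'d::finite Gelem" where
  "Gunit = (0, mat 1)"

definition piG :: "'d::finite Gelem \<Rightarrow> real^'d" where
  "piG g = fst g"

definition hG :: "'d::finite Gelem \<Rightarrow> real^'d^'d" where
  "hG g = snd g"

definition sG :: "real^'d::finite \<Rightarrow> 'd Gelem" where
  "sG x = (x, mat 1)"

definition closed_orth_subgroup :: "(real^'d::finite^'d) set \<Rightarrow> bool" where
  "closed_orth_subgroup H \<longleftrightarrow>
     H \<subseteq> {h. orthogonal_matrix h} \<and> closed H \<and> mat 1 \<in> H \<and>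
     (\<forall>h\<in>H. \<forall>h'\<in>H. h ** h' \<in> H) \<and> (\<forall>h\<in>H. matrix_inv h \<in> H)"

definition normalised_haar :: "(real^'d::finite^'d) set \<Rightarrow> (real^'d^'d) measure \<Rightarrow> bool" where
  "normalised_haar H \<mu> \<longleftrightarrow>
     sets \<mu> = sets (restrict_space borel H) \<and> emeasure \<mu> H = 1 \<and>
     (\<forall>h\<in>H. \<forall>A\<in>sets \<mu>. emeasure \<mu> ((\<lambda>h'. h ** h') -` A \<inter> H) = emeasure \<mu> A)"

definition is_rep :: "(real^'d::finite^'d) set \<Rightarrow> (real^'d^'d \<Rightarrow> real^'n::finite^'n) \<Rightarrow> bool" where
  "is_rep H \<rho> \<longleftrightarrow> continuous_on H \<rho> \<and> \<rho> (mat 1) = mat 1 \<and>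
     (\<forall>h\<in>H. \<forall>h'\<in>H. \<rho> (h ** h') = \<rho> h ** \<rho> h')"

definition in_induced :: "(real^'d::finite^'d) set \<Rightarrow> (real^'d^'d \<Rightarrow> real^'c::finite^'c)
    \<Rightarrow> ('d Gelem \<Rightarrow> real^'c) \<Rightarrow> bool" where
  "in_induced H \<rho> F \<longleftrightarrow>
     (\<forall>x h h'. h \<in> H \<longrightarrow> h' \<in> H \<longrightarrow>
        F (Gmul (x, h) (0, h')) = \<rho> (matrix_inv h') *v F (x, h))"

definition haarG :: "(real^'d::finite^'d) measure \<Rightarrow> 'd Gelem measure" where
  "haarG \<mu> = lborel \<Otimes>\<^sub>M \<mu>"

text \<open>Action: [g^-1 F](g') = F(g g').\<close>
definition act_inv :: "'d::finite Gelem \<Rightarrow> ('d Gelem \<Rightarrow> 'b) \<Rightarrow> 'd Gelem \<Rightarrow> 'b" where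
  "act_inv g F g' = F (Gmul g g')"

definition lift :: "(real^'d::finite^'d \<Rightarrow> real^'c'::finite^'c') \<Rightarrow> (real^'d \<Rightarrow> real^'c')
    \<Rightarrow> 'd Gelem \<Rightarrow> real^'c'" where
  "lift \<sigma> f g = \<sigma> (matrix_inv (hG g)) *v f (piG g)"

definition sink :: "('d::finite Gelem \<Rightarrow> 'b) \<Rightarrow> real^'d \<Rightarrow> 'b" where
  "sink F x = F (sG x)"

definition Psi :: "(real^'d::finite \<Rightarrow> real^'c::finite \<Rightarrow> real^'c \<Rightarrow> real^'c^'c'::finite)
    \<Rightarrow> (real^'d \<Rightarrow> real^'c) \<Rightarrow> real^'d \<Rightarrow> real^'c'" where
  "Psi k f x = (\<integral>x'. (k (x' - x) (f x) (f x') *v f x') \<partial>lborel)"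

definition kappa :: "(real^'d^'d \<Rightarrow> real^'c::finite^'c)
    \<Rightarrow> (real^'d::finite \<Rightarrow> real^'c \<Rightarrow> real^'c \<Rightarrow> real^'c^'c'::finite)
    \<Rightarrow> 'd Gelem \<Rightarrow> real^'c \<Rightarrow> real^'c \<Rightarrow> real^'c^'c'" where
  "kappa \<rho> k g u v = k (piG g) u (\<rho> (hG g) *v v) ** \<rho> (hG g)"

definition omega_hat :: "(real^'d^'d \<Rightarrow> real^'c::finite^'c)
    \<Rightarrow> (real^'d::finite \<Rightarrow> real^'c \<Rightarrow> real^'c \<Rightarrow> real^'c^'c'::finite)
    \<Rightarrow> ('d Gelem \<Rightarrow> real^'c) \<Rightarrow> 'd Gelem \<Rightarrow> real^'c'" where
  "omega_hat \<rho> k F' g' = kappa \<rho> k g' (F' Gunit) (F' g') *v F' g'"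

end

theory Submission
  imports Defs "HOL-Probability.Probability_Measure"
begin

(* For g = (a, h0) and r = h0^T, the induced-representation property gives [g^-1 F](e) = rho(r) f(a)
   and rho(h) [g^-1 F](x, h) = rho(r) f(a + h0 x), with f the sink of F. Steerability at r then turns
   omega_hat(g^-1 F, (x, h)) into sigma(r) applied to the integrand of [Psi_k f](a) at a + h0 x.
   This does not depend on h, so integrating over the probability measure on H changes nothing, and
   the measure-preserving change of variables x' = a + h0 x leaves sigma(r) [Psi_k f](a), which is
   [Lift (Psi_k f)](g). *)

lemma borel_measurable_linear:
  fixes f :: "'a::euclidean_space \<Rightarrow> 'b::euclidean_space"
  assumes "linear f"
  shows "f \<in> borel_measurable borel"
  using assms by (intro borel_measurable_continuous_onI linear_continuous_on)
    (simp add: linear_conv_bounded_linear)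

lemma borel_measurable_matrix_affine:
  fixes A :: "real^'n::finite^'m::finite"
  shows "(\<lambda>x. a + A *v x) \<in> borel_measurable borel"
  using borel_measurable_linear[OF matrix_vector_mul_linear[of A]] by (intro borel_measurable_add) auto

lemma lborel_distr_orthogonal_transformation:
  fixes T :: "real^'n::{finite,wellorder} \<Rightarrow> real^'n::_"
  assumes T: "orthogonal_transformation T"
  shows "distr lborel borel T = lborel"
proof (rule lborel_eqI[symmetric])
  fix l u :: "real^'n::{finite,wellorder}"
  assume lu: "\<And>b. b \<in> Basis \<Longrightarrow> l \<bullet> b \<le> u \<bullet> b"
  have "linear T" using T by (simp add: orthogonal_transformation_linear)
  have T_inv: "orthogonal_transformation (inv T)"
    using T orthogonal_transformation_inv by blast
  have vimage_box: "T -` box l u = inv T ` box l u"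
    using orthogonal_transformation_bij[OF T] by (simp add: bij_vimage_eq_inv_image)
  have "open (T -` box l u)"
    using \<open>linear T\<close> by (intro continuous_open_vimage open_box linear_continuous_at)
      (simp add: linear_conv_bounded_linear[symmetric])
  then have "emeasure (distr lborel borel T) (box l u) = emeasure lebesgue (inv T ` box l u)"
    using borel_measurable_linear[OF \<open>linear T\<close>]
    by (simp add: emeasure_distr emeasure_completion vimage_box[symmetric])
  also have "\<dots> = emeasure lebesgue (box l u)"
    using measurable_orthogonal_image[OF T_inv] measure_orthogonal_image[OF T_inv]
    by (simp add: emeasure_eq_measure2)
  also have "\<dots> = (\<Prod>b\<in>Basis. (u - l) \<bullet> b)"
    using lu by (simp add: emeasure_completion)
  finally show "emeasure (distr lborel borel T) (box l u) = (\<Prod>b\<in>Basis. (u - l) \<bullet> b)" .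
qed simp

lemma Basis_vec_axis: "(Basis :: (real^'n::finite) set) = (\<lambda>i. axis i 1) ` UNIV"
  by (auto simp: Basis_vec_def)

lemma prod_Basis_vec: "(\<Prod>b\<in>(Basis :: (real^'n::finite) set). x \<bullet> b) = (\<Prod>i\<in>UNIV. x $ i)"
proof -
  have "inj (\<lambda>i::'n. axis i (1::real))" by (auto simp: inj_def axis_eq_axis)
  then show ?thesis unfolding Basis_vec_axis by (simp add: prod.reindex inner_axis)
qed

lemma lborel_distr_reindex:
  fixes e :: "'a::finite \<Rightarrow> 'b::finite"
  assumes e: "bij e"
  shows "distr lborel borel (\<lambda>v::real^'b. \<chi> i. v $ e i) = (lborel :: (real^'a) measure)"
proof (rule lborel_eqI[symmetric])
  fix l u :: "real^'a" assume lu: "\<And>b. b \<in> Basis \<Longrightarrow> l \<bullet> b \<le> u \<bullet> b"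
  have lu_coord: "l $ i \<le> u $ i" for i
    using lu[of "axis i 1"] by (simp add: Basis_vec_axis inner_axis)
  let ?P = "\<lambda>v::real^'b. \<chi> i. v $ e i"
  let ?L = "\<chi> j. l $ inv e j" and ?U = "\<chi> j. u $ inv e j"
  have "linear ?P" by (auto simp: linear_iff vec_eq_iff)
  have "?P -` box l u = box ?L ?U"
    using e unfolding set_eq_iff vimage_eq
    by (simp add: mem_box_cart) (metis bij_inv_eq_iff)
  then have "emeasure (distr lborel borel ?P) (box l u) = emeasure lborel (box ?L ?U)"
    using borel_measurable_linear[OF \<open>linear ?P\<close>] by (simp add: emeasure_distr)
  also have "\<dots> = (\<Prod>b\<in>Basis. (?U - ?L) \<bullet> b)"
    by (intro emeasure_lborel_box) (auto simp: Basis_vec_axis inner_axis lu_coord)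
  also have "\<dots> = (\<Prod>j\<in>UNIV. (u - l) $ inv e j)"
    by (simp add: prod_Basis_vec)
  also have "\<dots> = (\<Prod>i\<in>UNIV. (u - l) $ i)"
    using prod.reindex_bij_betw[OF bij_betw_inv_into[OF e], of "\<lambda>i. (u - l) $ i"] by simp
  finally show "emeasure (distr lborel borel ?P) (box l u) = (\<Prod>b\<in>Basis. (u - l) \<bullet> b)"
    by (simp add: prod_Basis_vec)
qed simp

lemma orthogonal_transformation_reindex:
  fixes e :: "'a::finite \<Rightarrow> 'b::finite"
  assumes e: "bij e"
  shows "orthogonal_transformation (\<lambda>v::real^'b. (\<chi> i. v $ e i) :: real^'a)"
  unfolding orthogonal_transformation_def
proof safe
  show "linear (\<lambda>v::real^'b. (\<chi> i. v $ e i) :: real^'a)" by (auto simp: linear_iff vec_eq_iff)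
  fix v w :: "real^'b"
  show "((\<chi> i. v $ e i) :: real^'a) \<bullet> (\<chi> i. w $ e i) = v \<bullet> w"
    unfolding inner_vec_def using sum.reindex_bij_betw[OF e, of "\<lambda>j. v $ j \<bullet> w $ j"] by simp
qed

(* Change_Of_Vars proves the invariance of Lebesgue measure only for index types of class wellorder;
   a copy of an arbitrary finite index type ordered through to_nat provides one. *)
typedef 'a ordered_copy = "UNIV :: 'a set" by simp

instantiation ordered_copy :: (finite) wellorder
begin

definition less_eq_ordered_copy :: "'a ordered_copy \<Rightarrow> 'a ordered_copy \<Rightarrow> bool" where
  "x \<le> y \<longleftrightarrow> to_nat (Rep_ordered_copy x) \<le> to_nat (Rep_ordered_copy y)"

definition less_ordered_copy :: "'a ordered_copy \<Rightarrow> 'a ordered_copy \<Rightarrow> bool" where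
  "x < y \<longleftrightarrow> to_nat (Rep_ordered_copy x) < to_nat (Rep_ordered_copy y)"

instance
proof
  fix x y :: "'a ordered_copy"
  assume "x \<le> y" "y \<le> x"
  then have "to_nat (Rep_ordered_copy x) = to_nat (Rep_ordered_copy y)"
    by (simp add: less_eq_ordered_copy_def)
  then show "x = y"
    by (rule Rep_ordered_copy_inject[THEN iffD1, OF injD[OF inj_to_nat]])
next
  fix P :: "'a ordered_copy \<Rightarrow> bool" and a :: "'a ordered_copy"
  assume step: "\<And>x. (\<And>y. y < x \<Longrightarrow> P y) \<Longrightarrow> P x"
  show "P a"
  proof (induction a rule: measure_induct_rule[of "\<lambda>x. to_nat (Rep_ordered_copy x)"])
    case (less x)
    then show ?case
      by (rule step) (simp add: less_ordered_copy_def)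
  qed
qed (auto simp: less_eq_ordered_copy_def less_ordered_copy_def)

end

instance ordered_copy :: (finite) finite
proof
  have "inj (Rep_ordered_copy :: 'a ordered_copy \<Rightarrow> 'a)"
    by (simp add: inj_on_def Rep_ordered_copy_inject)
  then show "finite (UNIV :: 'a ordered_copy set)"
    by (rule finite_imageD[OF finite])
qed

lemma lborel_distr_orthogonal_matrix:
  fixes h :: "real^'d::finite^'d"
  assumes h: "orthogonal_matrix h"
  shows "distr lborel borel ((*v) h) = lborel"
proof -
  let ?P = "\<lambda>v::real^'d. (\<chi> i. v $ Rep_ordered_copy i) :: real^'d ordered_copy"
  let ?Q = "\<lambda>w::real^'d ordered_copy. (\<chi> j. w $ Abs_ordered_copy j) :: real^'d"
  have bij_Rep: "bij (Rep_ordered_copy :: 'd ordered_copy \<Rightarrow> 'd)"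
    by (metis Rep_ordered_copy_inverse Abs_ordered_copy_inverse UNIV_I bij_betw_byWitness subset_UNIV)
  have bij_Abs: "bij (Abs_ordered_copy :: 'd \<Rightarrow> 'd ordered_copy)"
    by (metis Rep_ordered_copy_inverse Abs_ordered_copy_inverse UNIV_I bij_betw_byWitness subset_UNIV)
  define T where "T = ?P \<circ> (*v) h \<circ> ?Q"
  have T: "orthogonal_transformation T"
    unfolding T_def using h
    by (intro orthogonal_transformation_compose orthogonal_transformation_reindex bij_Rep bij_Abs)
      (simp add: orthogonal_transformation_matrix)
  have h_eq: "(*v) h = ?Q \<circ> (T \<circ> ?P)"
    by (simp add: T_def fun_eq_iff vec_eq_iff Abs_ordered_copy_inverse)
  have [measurable]: "?P \<in> borel_measurable borel" "?Q \<in> borel_measurable borel"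
    "T \<in> borel_measurable borel"
    by (intro borel_measurable_linear orthogonal_transformation_linear
        orthogonal_transformation_reindex bij_Rep bij_Abs T)+
  have "distr lborel borel ((*v) h) = distr (distr (distr lborel borel ?P) borel T) borel ?Q"
    unfolding h_eq by (simp add: distr_distr comp_assoc)
  also have "\<dots> = lborel"
    by (simp add: lborel_distr_reindex bij_Rep bij_Abs lborel_distr_orthogonal_transformation T)
  finally show ?thesis .
qed

lemma lborel_integral_orthogonal_affine:
  fixes h :: "real^'d::finite^'d" and f :: "real^'d \<Rightarrow> 'b::{banach, second_countable_topology}"
  assumes h: "orthogonal_matrix h" and f: "f \<in> borel_measurable lborel"
  shows "(\<integral>x. f (a + h *v x) \<partial>lborel) = (\<integral>x. f x \<partial>lborel)"
proof -
  have [measurable]: "(*v) h \<in> borel_measurable borel"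
    by (rule borel_measurable_linear[OF matrix_vector_mul_linear])
  have "distr lborel borel (\<lambda>x. a + h *v x) = distr (distr lborel borel ((*v) h)) borel ((+) a)"
    by (simp add: distr_distr comp_def)
  then have "distr lborel borel (\<lambda>x. a + h *v x) = lborel"
    by (simp add: lborel_distr_orthogonal_matrix[OF h] lborel_distr_plus)
  then show ?thesis
    using integral_distr[of "\<lambda>x. a + h *v x" lborel borel f] f by simp
qed

lemma integral_pair_prob_space_fst:
  fixes f :: "'a \<Rightarrow> 'c::{banach, second_countable_topology}"
  assumes "prob_space M" and "f \<in> borel_measurable N"
  shows "(\<integral>p. f (fst p) \<partial>(N \<Otimes>\<^sub>M M)) = (\<integral>x. f x \<partial>N)"
  using integral_distr[of fst "N \<Otimes>\<^sub>M M" N f] assms by (simp add: prob_space.distr_pair_fst)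

lemma matrix_inv_unique:
  fixes A B :: "'a::comm_ring_1^'n::finite^'n"
  assumes AB: "A ** B = mat 1" and BA: "B ** A = mat 1"
  shows "matrix_inv A = B"
proof -
  have "A ** matrix_inv A = mat 1"
    unfolding matrix_inv_def by (rule someI2[of _ B]) (simp_all add: AB BA)
  then have "B ** (A ** matrix_inv A) = B" by simp
  then show ?thesis by (simp add: matrix_mul_assoc BA)
qed

lemma orthogonal_matrix_inv:
  fixes h :: "real^'n::finite^'n"
  assumes "orthogonal_matrix h"
  shows "matrix_inv h = transpose h"
  using assms by (intro matrix_inv_unique) (auto simp: orthogonal_matrix_def)

lemma closed_orth_subgroupD:
  assumes "closed_orth_subgroup H"
  shows "mat 1 \<in> H" and "h \<in> H \<Longrightarrow> h' \<in> H \<Longrightarrow> h ** h' \<in> H"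
    and "h \<in> H \<Longrightarrow> orthogonal_matrix h" and "h \<in> H \<Longrightarrow> transpose h \<in> H"
  using assms by (auto simp: closed_orth_subgroup_def orthogonal_matrix_inv[symmetric])

lemma is_rep_transpose:
  assumes H: "closed_orth_subgroup H" and \<rho>: "is_rep H \<rho>" and h: "h \<in> H"
  shows "\<rho> h ** \<rho> (transpose h) = mat 1" and "\<rho> (transpose h) ** \<rho> h = mat 1"
proof -
  have "orthogonal_matrix h" and ht: "transpose h \<in> H"
    using closed_orth_subgroupD(3,4)[OF H h] .
  then have "h ** transpose h = mat 1" "transpose h ** h = mat 1"
    by (simp_all add: orthogonal_matrix_def)
  then show "\<rho> h ** \<rho> (transpose h) = mat 1" "\<rho> (transpose h) ** \<rho> h = mat 1"
    using \<rho> h ht unfolding is_rep_def by metis+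
qed

lemma is_rep_matrix_inv:
  assumes "closed_orth_subgroup H" and "is_rep H \<rho>" and "h \<in> H"
  shows "matrix_inv (\<rho> h) = \<rho> (transpose h)"
  using is_rep_transpose[OF assms] by (rule matrix_inv_unique)

lemma in_induced_eq_sink:
  assumes H: "closed_orth_subgroup H" and F: "in_induced H \<rho> F" and h: "h \<in> H"
  shows "F (x, h) = \<rho> (transpose h) *v sink F x"
  using F closed_orth_subgroupD(1,3)[OF H] h
  by (fastforce simp: in_induced_def Gmul_def sink_def sG_def orthogonal_matrix_inv)

lemma omega_hat_act_inv:
  fixes a x :: "real^'d::finite"
  assumes H: "closed_orth_subgroup H" and \<rho>: "is_rep H \<rho>"
    and steer: "\<And>h y u v. h \<in> H \<Longrightarrow>
       k (h *v y) (\<rho> h *v u) (\<rho> h *v v) = \<sigma> h ** k y u v ** matrix_inv (\<rho> h)"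
    and F: "in_induced H \<rho> F" and h0: "h0 \<in> H" and h: "h \<in> H"
  defines "f \<equiv> sink F" and "z \<equiv> a + h0 *v x"
  shows "omega_hat \<rho> k (act_inv (a, h0) F) (x, h)
    = \<sigma> (transpose h0) *v (k (h0 *v x) (f a) (f z) *v f z)"
proof -
  define r where "r = transpose h0"
  have r: "r \<in> H" "r ** h0 = mat 1" "transpose r = h0"
    using closed_orth_subgroupD(3,4)[OF H h0] by (simp_all add: r_def orthogonal_matrix_def)
  have \<rho>_mult: "\<rho> (h1 ** h2) = \<rho> h1 ** \<rho> h2" if "h1 \<in> H" "h2 \<in> H" for h1 h2
    using \<rho> that by (simp add: is_rep_def)
  have at_unit: "act_inv (a, h0) F Gunit = \<rho> r *v f a"
    using in_induced_eq_sink[OF H F h0] by (simp add: act_inv_def Gmul_def Gunit_def r_def f_def)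
  have "act_inv (a, h0) F (x, h) = \<rho> (transpose h ** r) *v f z"
    using in_induced_eq_sink[OF H F closed_orth_subgroupD(2)[OF H h0 h]]
    by (simp add: act_inv_def Gmul_def matrix_transpose_mul r_def f_def z_def)
  then have rotated: "\<rho> h *v act_inv (a, h0) F (x, h) = \<rho> r *v f z"
    using is_rep_transpose(1)[OF H \<rho> h] closed_orth_subgroupD(4)[OF H h] r(1)
    by (simp add: \<rho>_mult matrix_vector_mul_assoc matrix_mul_assoc)
  have cancel: "\<rho> h0 *v (\<rho> r *v v) = v" for v
    using is_rep_transpose(1)[OF H \<rho> h0] by (simp add: matrix_vector_mul_assoc r_def)
  have steered: "k x (\<rho> r *v f a) (\<rho> r *v f z) = \<sigma> r ** k (h0 *v x) (f a) (f z) ** \<rho> h0"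
    using steer[OF r(1), of "h0 *v x"] r
    by (simp add: matrix_vector_mul_assoc is_rep_matrix_inv[OF H \<rho>])
  have "omega_hat \<rho> k (act_inv (a, h0) F) (x, h) = k x (\<rho> r *v f a) (\<rho> r *v f z) *v (\<rho> r *v f z)"
    unfolding omega_hat_def kappa_def at_unit piG_def hG_def
    by (simp add: rotated flip: matrix_vector_mul_assoc)
  also have "\<dots> = \<sigma> r *v (k (h0 *v x) (f a) (f z) *v f z)"
    by (simp add: steered cancel flip: matrix_vector_mul_assoc)
  finally show ?thesis unfolding r_def .
qed

lemma normalised_haar_prob_space:
  assumes "normalised_haar H \<mu>"
  shows "prob_space \<mu>" and "space \<mu> = H"
proof -
  show space: "space \<mu> = H"
    using assms sets_eq_imp_space_eq[of \<mu> "restrict_space borel H"]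
    by (simp add: normalised_haar_def space_restrict_space)
  show "prob_space \<mu>"
    using assms by (intro prob_spaceI) (simp add: normalised_haar_def space)
qed

theorem mainTheorem10:
  fixes H :: "(real^'d::finite^'d) set"
    and \<mu> :: "(real^'d^'d) measure"
    and \<rho> :: "real^'d^'d \<Rightarrow> real^'c::finite^'c"
    and \<sigma> :: "real^'d^'d \<Rightarrow> real^'c'::finite^'c'"
    and k :: "real^'d \<Rightarrow> real^'c \<Rightarrow> real^'c \<Rightarrow> real^'c^'c'"
    and F :: "'d Gelem \<Rightarrow> real^'c"
    and g :: "'d Gelem"
  assumes "closed_orth_subgroup H"
    and "normalised_haar H \<mu>"
    and "is_rep H \<rho>"
    and "is_rep H \<sigma>"
    and steer: "\<And>h y u v. h \<in> H \<Longrightarrow>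
       k (h *v y) (\<rho> h *v u) (\<rho> h *v v) = \<sigma> h ** k y u v ** matrix_inv (\<rho> h)"
    and "in_induced H \<rho> F"
    and "g \<in> UNIV \<times> H"
    and int_G: "integrable (haarG \<mu>) (\<lambda>g'. omega_hat \<rho> k (act_inv g F) g')"
    and int_Rd: "\<And>x. integrable lborel
       (\<lambda>x'. k (x' - x) (sink F x) (sink F x') *v sink F x')"
  shows "(\<integral>g'. omega_hat \<rho> k (act_inv g F) g' \<partial>haarG \<mu>) = lift \<sigma> (Psi k (sink F)) g"
proof -
  obtain a h0 where g: "g = (a, h0)" and h0: "h0 \<in> H" using \<open>g \<in> UNIV \<times> H\<close> by auto
  define \<psi> where "\<psi> x' = \<sigma> (transpose h0) *v (k (x' - a) (sink F a) (sink F x') *v sink F x')" for x'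
  have \<mu>: "prob_space \<mu>" "space \<mu> = H"
    using normalised_haar_prob_space[OF \<open>normalised_haar H \<mu>\<close>] by auto
  have omega: "omega_hat \<rho> k (act_inv g F) p = \<psi> (a + h0 *v fst p)" if "p \<in> space (haarG \<mu>)" for p
    using that omega_hat_act_inv[where k = k and \<sigma> = \<sigma> and h = "snd p" and a = a and x = "fst p",
        OF assms(1,3) steer assms(6) h0]
    by (cases p) (simp add: g \<psi>_def haarG_def space_pair_measure \<mu>)
  have \<psi>: "integrable lborel \<psi>"
    unfolding \<psi>_def by (intro integrable_bounded_linear[OF matrix_vector_mul_bounded_linear] int_Rd)
  have \<psi>_moved: "(\<lambda>x. \<psi> (a + h0 *v x)) \<in> borel_measurable lborel"
    using measurable_compose[OF borel_measurable_matrix_affine, of \<psi>] borel_measurable_integrable[OF \<psi>]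
    by simp
  have "(\<integral>g'. omega_hat \<rho> k (act_inv g F) g' \<partial>haarG \<mu>) = (\<integral>p. \<psi> (a + h0 *v fst p) \<partial>haarG \<mu>)"
    by (rule Bochner_Integration.integral_cong) (simp_all add: omega)
  also have "\<dots> = (\<integral>x. \<psi> (a + h0 *v x) \<partial>lborel)"
    unfolding haarG_def by (rule integral_pair_prob_space_fst[OF \<mu>(1) \<psi>_moved])
  also have "\<dots> = (\<integral>x. \<psi> x \<partial>lborel)"
    using closed_orth_subgroupD(3)[OF assms(1) h0] borel_measurable_integrable[OF \<psi>]
    by (rule lborel_integral_orthogonal_affine)
  also have "\<dots> = lift \<sigma> (Psi k (sink F)) g"
    unfolding \<psi>_def Psi_def lift_def g hG_def piG_def
    by (simp add: integral_bounded_linear[OF matrix_vector_mul_bounded_linear int_Rd]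
        orthogonal_matrix_inv closed_orth_subgroupD(3)[OF assms(1) h0])
  finally show ?thesis .
qed

end
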